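(* Let $N\ge1$ and let $\Upsilon_N:=\{\alpha\in\mathbb N_0^s:\prod_{j=1}^s(\alpha_j+1)\le N\}$ (the hyperbolic cross of order $N$). Then $\Upsilon_N$ is a minimal monomial degree reducing universal interpolation set of order $N$: it is a monomial degree reducing universal interpolation set of order $N$, and every monomial degree reducing universal interpolation set of order $N$ contains $\Upsilon_N$.
   Context: $\Pi=\mathbb C[x_1,\dots,x_s]$, $\deg$ is total degree with $\deg 0<0$. For $A\subset\mathbb N_0^s$, $\Pi_A$ is the span of the monomials $x^\alpha$, $\alpha\in A$. A subspace $\mathcal P\subseteq\Pi$ is a degree reducing universal interpolation space of order $N$ if for every finite $X\subset\mathbb C^s$ with $\#X\le N$ and every $q\in\Pi$ there is $p\in\mathcal P$ with $p|_X=q|_X$ and $\deg p\le\deg q$. A set $A\subset\mathbb N_0^s$ is a monomial degree reducing universal interpolation set of order $N$ if $\Pi_A$ is a degree reducing universal interpolation space of order $N$. *)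

theory Defs
  imports Complex_Main "HOL-Library.Poly_Mapping"
begin

text \<open>Polynomials in C[x_j : j in 'n] ('n a finite type, s = CARD('n)) are finitely
  supported coefficient maps from exponent vectors ('n => nat) to complex numbers.\<close>

type_synonym 'n mpoly = "('n \<Rightarrow> nat) \<Rightarrow>\<^sub>0 complex"

definition mpoly_eval :: "'n::finite mpoly \<Rightarrow> ('n \<Rightarrow> complex) \<Rightarrow> complex" where
  "mpoly_eval p x = (\<Sum>\<alpha>\<in>Poly_Mapping.keys p. Poly_Mapping.lookup p \<alpha> * (\<Prod>j\<in>UNIV. x j ^ \<alpha> j))"

text \<open>Total degree, with deg 0 = -1 < 0.\<close>
definition mpoly_deg :: "'n::finite mpoly \<Rightarrow> int" where
  "mpoly_deg p = (if p = 0 then -1 else int (Max ((\<lambda>\<alpha>. \<Sum>j\<in>UNIV. \<alpha> j) ` Poly_Mapping.keys p)))"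

definition monomial_span :: "('n::finite \<Rightarrow> nat) set \<Rightarrow> 'n mpoly set" where
  "monomial_span A = {p. Poly_Mapping.keys p \<subseteq> A}"

definition deg_red_univ_interp_space :: "'n::finite mpoly set \<Rightarrow> nat \<Rightarrow> bool" where
  "deg_red_univ_interp_space P N \<longleftrightarrow>
     (\<forall>X :: ('n \<Rightarrow> complex) set. finite X \<and> card X \<le> N \<longrightarrow>
        (\<forall>q. \<exists>p\<in>P. (\<forall>x\<in>X. mpoly_eval p x = mpoly_eval q x) \<and> mpoly_deg p \<le> mpoly_deg q))"

definition monomial_deg_red_univ_interp_set :: "('n::finite \<Rightarrow> nat) set \<Rightarrow> nat \<Rightarrow> bool" where
  "monomial_deg_red_univ_interp_set A N \<longleftrightarrow> deg_red_univ_interp_space (monomial_span A) N"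

definition hyperbolic_cross :: "nat \<Rightarrow> ('n::finite \<Rightarrow> nat) set" where
  "hyperbolic_cross N = {\<alpha>. (\<Prod>j\<in>UNIV. \<alpha> j + 1) \<le> N}"

end

theory Submission
  imports Defs "HOL-Library.Function_Algebras" "HOL-Library.List_Lexorder"
    "HOL-Analysis.Complex_Transcendental"
begin

text \<open>
  Fix the node set X and order exponents by the graded lexicographic order. Call
  \<open>\<alpha>\<close> standard for X if the monomial \<open>x\<^sup>\<alpha>\<close>, restricted to X, is not a linear combination of
  restrictions of smaller monomials. Restrictions of standard monomials are linearly independent,
  so there are at most \<open>#X\<close> of them; the standard exponents form a lower set, so with \<open>\<alpha>\<close> the whole
  box below \<open>\<alpha>\<close>, of size \<open>\<Prod>(\<alpha>\<^sub>j + 1)\<close>, is standard, whence \<open>\<alpha> \<in> \<Upsilon>\<^sub>N\<close>. Every monomial agrees on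
  X with a combination of standard monomials of no larger degree, which gives the degree
  reducing interpolant in \<open>\<Pi>\<^bsub>\<Upsilon>\<^sub>N\<^esub>\<close>.

  For \<open>\<alpha> \<in> \<Upsilon>\<^sub>N\<close> take the grid X whose j-th factor consists of the
  \<open>(\<alpha>\<^sub>j + 1)\<close>-th roots of unity, and the functional \<open>L f = \<Sum>\<^bsub>x\<in>X\<^esub> x\<^sub>1\<cdots>x\<^sub>s f(x)\<close>. Then \<open>L(x\<^sup>\<beta>)\<close>
  factors into power sums of roots of unity; it vanishes whenever some \<open>\<beta>\<^sub>j < \<alpha>\<^sub>j\<close>, which is
  the case for every \<open>\<beta> \<noteq> \<alpha>\<close> with \<open>|\<beta>| \<le> |\<alpha>|\<close>, while \<open>L(x\<^sup>\<alpha>) \<noteq> 0\<close>. So a degree reducing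
  interpolant of \<open>x\<^sup>\<alpha>\<close> on X must contain the monomial \<open>x\<^sup>\<alpha>\<close>.
\<close>

section \<open>Exponents and the graded lexicographic order\<close>

definition total_degree :: "('n::finite \<Rightarrow> nat) \<Rightarrow> nat" where
  "total_degree \<alpha> = (\<Sum>j\<in>UNIV. \<alpha> j)"

definition monom_eval :: "('n::finite \<Rightarrow> nat) \<Rightarrow> ('n \<Rightarrow> complex) \<Rightarrow> complex" where
  "monom_eval \<alpha> x = (\<Prod>j\<in>UNIV. x j ^ \<alpha> j)"

lemma component_le_total_degree: "\<alpha> j \<le> total_degree \<alpha>"
  unfolding total_degree_def by (rule member_le_sum) auto

lemma finite_bounded_exponents: "finite {\<alpha> :: 'n::finite \<Rightarrow> nat. \<forall>j. \<alpha> j \<le> n}"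
proof -
  have "{\<alpha> :: 'n \<Rightarrow> nat. \<forall>j. \<alpha> j \<le> n} = PiE UNIV (\<lambda>_. {0..n})"
    by (auto simp: PiE_UNIV_domain)
  then show ?thesis by (simp add: finite_PiE)
qed

lemma monom_eval_add: "monom_eval (\<lambda>j. \<alpha> j + \<beta> j) x = monom_eval \<alpha> x * monom_eval \<beta> x"
  unfolding monom_eval_def by (simp add: power_add prod.distrib)

lemma exists_component_less:
  assumes "total_degree \<beta> \<le> total_degree \<alpha>" "\<beta> \<noteq> \<alpha>"
  shows "\<exists>j. \<beta> j < \<alpha> j"
proof (rule ccontr)
  assume "\<not> ?thesis"
  then have le: "\<forall>j\<in>UNIV. \<alpha> j \<le> \<beta> j" by (auto simp: not_less)
  moreover from assms(2) obtain j where "\<alpha> j \<noteq> \<beta> j" by (metis ext)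
  ultimately have "\<exists>j\<in>UNIV. \<alpha> j < \<beta> j" by (auto simp: order.order_iff_strict)
  then have "total_degree \<alpha> < total_degree \<beta>"
    unfolding total_degree_def using le by (intro sum_strict_mono_ex1) auto
  with assms(1) show False by simp
qed

definition index_list :: "'n::finite list" where
  "index_list = (SOME xs. set xs = UNIV)"

lemma set_index_list: "set (index_list :: 'n::finite list) = UNIV"
  unfolding index_list_def by (rule someI_ex) (use finite_list[of "UNIV :: 'n set"] in simp)

definition grlex_key :: "('n::finite \<Rightarrow> nat) \<Rightarrow> nat list" where
  "grlex_key \<alpha> = total_degree \<alpha> # map \<alpha> index_list"

definition grlex_less :: "('n::finite \<Rightarrow> nat) \<Rightarrow> ('n \<Rightarrow> nat) \<Rightarrow> bool" where
  "grlex_less \<alpha> \<beta> \<longleftrightarrow> grlex_key \<alpha> < grlex_key \<beta>"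

lemma grlex_key_inj: "grlex_key \<alpha> = grlex_key \<beta> \<Longrightarrow> \<alpha> = \<beta>"
  unfolding grlex_key_def using set_index_list by (auto simp: map_eq_conv)

lemma grlex_less_total_degree: "grlex_less \<alpha> \<beta> \<Longrightarrow> total_degree \<alpha> \<le> total_degree \<beta>"
  unfolding grlex_less_def grlex_key_def by auto

lemma grlex_less_irrefl: "\<not> grlex_less \<alpha> \<alpha>"
  unfolding grlex_less_def by simp

lemma grlex_less_trans: "grlex_less \<alpha> \<beta> \<Longrightarrow> grlex_less \<beta> \<gamma> \<Longrightarrow> grlex_less \<alpha> \<gamma>"
  unfolding grlex_less_def by auto

lemma grlex_less_linear: "\<alpha> \<noteq> \<beta> \<Longrightarrow> grlex_less \<alpha> \<beta> \<or> grlex_less \<beta> \<alpha>"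
  unfolding grlex_less_def using grlex_key_inj by (metis linorder_neqE)

lemma lexord_less_map2_plus:
  fixes xs ys zs :: "nat list"
  shows "length xs = length zs \<Longrightarrow> length ys = length zs \<Longrightarrow> xs < ys \<Longrightarrow>
    map2 (+) xs zs < map2 (+) ys zs"
proof (induction zs arbitrary: xs ys)
  case (Cons z zs)
  then obtain x xs' y ys' where "xs = x # xs'" "ys = y # ys'"
    by (metis length_Suc_conv)
  with Cons show ?case by auto
qed simp

lemma grlex_key_add: "grlex_key (\<lambda>j. \<alpha> j + \<beta> j) = map2 (+) (grlex_key \<alpha>) (grlex_key \<beta>)"
proof -
  have "map (\<lambda>j. \<alpha> j + \<beta> j) l = map2 (+) (map \<alpha> l) (map \<beta> l)" for l :: "'a list"
    by (induction l) auto
  then show ?thesis unfolding grlex_key_def total_degree_def by (simp add: sum.distrib)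
qed

lemma grlex_less_add:
  "grlex_less \<alpha> \<beta> \<Longrightarrow> grlex_less (\<lambda>j. \<alpha> j + \<gamma> j) (\<lambda>j. \<beta> j + \<gamma> j)"
  unfolding grlex_less_def grlex_key_add
  by (rule lexord_less_map2_plus) (auto simp: grlex_key_def)

lemma finite_grlex_less_below: "finite {\<beta>. grlex_less \<beta> \<alpha>}"
  by (rule finite_subset[OF _ finite_bounded_exponents[of "total_degree \<alpha>"]])
     (auto dest!: grlex_less_total_degree intro: order_trans[OF component_le_total_degree])

lemma wfp_grlex_less: "wfp grlex_less"
proof (rule wfp_if_convertible_to_nat)
  fix \<beta> \<alpha> assume "grlex_less \<beta> \<alpha>"
  moreover have "\<beta> \<notin> {\<gamma>. grlex_less \<gamma> \<beta>}" by (simp add: grlex_less_irrefl)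
  ultimately have "{\<gamma>. grlex_less \<gamma> \<beta>} \<subset> {\<gamma>. grlex_less \<gamma> \<alpha>}"
    by (auto intro: grlex_less_trans)
  then show "card {\<gamma>. grlex_less \<gamma> \<beta>} < card {\<gamma>. grlex_less \<gamma> \<alpha>}"
    by (rule psubset_card_mono[OF finite_grlex_less_below])
qed

lemma grlex_finite_has_max:
  assumes "finite F" "F \<noteq> {}"
  obtains \<alpha> where "\<alpha> \<in> F" "\<And>\<beta>. \<beta> \<in> F - {\<alpha>} \<Longrightarrow> grlex_less \<beta> \<alpha>"
proof -
  have "Max (grlex_key ` F) \<in> grlex_key ` F"
    using assms by (intro Max_in) auto
  then obtain \<alpha> where \<alpha>: "\<alpha> \<in> F" "grlex_key \<alpha> = Max (grlex_key ` F)"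
    by auto
  have "grlex_less \<beta> \<alpha>" if "\<beta> \<in> F - {\<alpha>}" for \<beta>
  proof -
    have "grlex_key \<beta> \<le> grlex_key \<alpha>" unfolding \<alpha>(2) using that assms by (intro Max_ge) auto
    moreover have "grlex_key \<beta> \<noteq> grlex_key \<alpha>" using grlex_key_inj that by blast
    ultimately show ?thesis unfolding grlex_less_def by auto
  qed
  with \<alpha>(1) show thesis by (rule that)
qed

section \<open>Standard exponents of a finite node set\<close>

interpretation cfun: vector_space "\<lambda>(c::complex) (f::'a \<Rightarrow> complex). (\<lambda>x. c * f x)"
  by unfold_locales (auto simp: algebra_simps fun_eq_iff)

lemma sum_fun_apply: "(\<Sum>i\<in>I. f i) x = (\<Sum>i\<in>I. f i x)"
  by (induction I rule: infinite_finite_induct) auto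

lemma cfun_span_mult:
  assumes "f \<in> cfun.span F"
  shows "(\<lambda>x. m x * f x) \<in> cfun.span ((\<lambda>g x. m x * g x) ` F)"
  using assms
proof (induction rule: cfun.span_induct_alt)
  case base
  then show ?case using cfun.span_zero by (simp add: zero_fun_def)
next
  case (step c f g)
  have "(\<lambda>x. m x * f x) \<in> cfun.span ((\<lambda>g x. m x * g x) ` F)"
    by (rule cfun.span_base) (use step in blast)
  then have "(\<lambda>x. c * (m x * f x)) + (\<lambda>x. m x * g x) \<in> cfun.span ((\<lambda>g x. m x * g x) ` F)"
    by (intro cfun.span_add cfun.span_scale step(2))
  moreover have "(\<lambda>x. m x * ((\<lambda>x. c * f x) + g) x) = (\<lambda>x. c * (m x * f x)) + (\<lambda>x. m x * g x)"
    by (simp add: fun_eq_iff algebra_simps)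
  ultimately show ?case by simp
qed

definition monom_on :: "('n::finite \<Rightarrow> complex) set \<Rightarrow> ('n \<Rightarrow> nat) \<Rightarrow> ('n \<Rightarrow> complex) \<Rightarrow> complex" where
  "monom_on X \<alpha> = (\<lambda>x. if x \<in> X then monom_eval \<alpha> x else 0)"

text \<open>The exponents of the standard monomials of the vanishing ideal of X with respect to the
  graded lexicographic order.\<close>
definition standard_exps :: "('n::finite \<Rightarrow> complex) set \<Rightarrow> ('n \<Rightarrow> nat) set" where
  "standard_exps X = {\<alpha>. monom_on X \<alpha> \<notin> cfun.span (monom_on X ` {\<beta>. grlex_less \<beta> \<alpha>})}"

lemma monom_on_shift: "(\<lambda>x. monom_eval \<gamma> x * monom_on X \<beta> x) = monom_on X (\<lambda>j. \<beta> j + \<gamma> j)"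
  by (auto simp: monom_on_def fun_eq_iff monom_eval_add)

lemma monom_on_in_span_standard_exps:
  "monom_on X \<alpha> \<in> cfun.span (monom_on X ` {\<beta> \<in> standard_exps X. \<beta> = \<alpha> \<or> grlex_less \<beta> \<alpha>})"
proof (induction \<alpha> rule: wfp_induct_rule[OF wfp_grlex_less])
  case (1 \<alpha>)
  let ?S = "cfun.span (monom_on X ` {\<beta> \<in> standard_exps X. \<beta> = \<alpha> \<or> grlex_less \<beta> \<alpha>})"
  show ?case
  proof (cases "\<alpha> \<in> standard_exps X")
    case True
    then show ?thesis by (intro cfun.span_base) auto
  next
    case False
    have "monom_on X ` {\<beta>. grlex_less \<beta> \<alpha>} \<subseteq> ?S"
    proof safe
      fix \<beta> assume "grlex_less \<beta> \<alpha>"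
      then have "cfun.span (monom_on X ` {\<gamma> \<in> standard_exps X. \<gamma> = \<beta> \<or> grlex_less \<gamma> \<beta>}) \<subseteq> ?S"
        by (intro cfun.span_mono image_mono) (auto intro: grlex_less_trans)
      with 1 \<open>grlex_less \<beta> \<alpha>\<close> show "monom_on X \<beta> \<in> ?S" by blast
    qed
    then have "cfun.span (monom_on X ` {\<beta>. grlex_less \<beta> \<alpha>}) \<subseteq> ?S"
      by (rule cfun.span_minimal) (rule cfun.subspace_span)
    with False show ?thesis by (auto simp: standard_exps_def)
  qed
qed

text \<open>Multiplying a relation expressing \<open>x\<^sup>\<beta>\<close> on X by \<open>x\<^sup>\<alpha>\<^sup>-\<^sup>\<beta>\<close> expresses \<open>x\<^sup>\<alpha>\<close>, since the order is
  translation invariant.\<close>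
lemma standard_exps_downward_closed:
  assumes \<alpha>: "\<alpha> \<in> standard_exps X" and le: "\<And>j. \<beta> j \<le> \<alpha> j"
  shows "\<beta> \<in> standard_exps X"
proof (rule ccontr)
  define \<gamma> where "\<gamma> = (\<lambda>j. \<alpha> j - \<beta> j)"
  have \<alpha>_eq: "\<alpha> = (\<lambda>j. \<beta> j + \<gamma> j)" using le by (auto simp: \<gamma>_def fun_eq_iff)
  assume "\<beta> \<notin> standard_exps X"
  then have "monom_on X \<beta> \<in> cfun.span (monom_on X ` {\<delta>. grlex_less \<delta> \<beta>})"
    by (auto simp: standard_exps_def)
  from cfun_span_mult[OF this, of "monom_eval \<gamma>"]
  have "monom_on X \<alpha> \<in> cfun.span ((\<lambda>f x. monom_eval \<gamma> x * f x) ` monom_on X ` {\<delta>. grlex_less \<delta> \<beta>})"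
    by (simp add: monom_on_shift \<alpha>_eq)
  also have "\<dots> \<subseteq> cfun.span (monom_on X ` {\<delta>. grlex_less \<delta> \<alpha>})"
    by (intro cfun.span_mono) (auto simp: monom_on_shift \<alpha>_eq intro: grlex_less_add)
  finally show False using \<alpha> by (auto simp: standard_exps_def)
qed

lemma inj_on_monom_on_standard_exps: "inj_on (monom_on X) (standard_exps X)"
proof (rule inj_onI, rule ccontr)
  fix \<alpha> \<beta> assume \<alpha>\<beta>: "\<alpha> \<in> standard_exps X" "\<beta> \<in> standard_exps X" "monom_on X \<alpha> = monom_on X \<beta>"
    "\<alpha> \<noteq> \<beta>"
  have "\<beta> \<notin> standard_exps X" if "grlex_less \<alpha> \<beta>" "monom_on X \<alpha> = monom_on X \<beta>" for \<alpha> \<beta>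
  proof -
    have "monom_on X \<alpha> \<in> monom_on X ` {\<gamma>. grlex_less \<gamma> \<beta>}" using that(1) by blast
    then have "monom_on X \<beta> \<in> cfun.span (monom_on X ` {\<gamma>. grlex_less \<gamma> \<beta>})"
      unfolding that(2) by (rule cfun.span_base)
    then show ?thesis by (simp add: standard_exps_def)
  qed
  with \<alpha>\<beta> grlex_less_linear show False by metis
qed

lemma independent_monom_on_standard_exps:
  assumes "finite F" "F \<subseteq> standard_exps X"
  shows "cfun.independent (monom_on X ` F)"
  using assms
proof (induction F rule: finite_psubset_induct)
  case (psubset F)
  show ?case
  proof (cases "F = {}")
    case False
    then obtain \<alpha> where \<alpha>: "\<alpha> \<in> F" "\<And>\<beta>. \<beta> \<in> F - {\<alpha>} \<Longrightarrow> grlex_less \<beta> \<alpha>"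
      using grlex_finite_has_max psubset.hyps by blast
    have "cfun.independent (monom_on X ` (F - {\<alpha>}))"
      using psubset \<alpha>(1) by (intro psubset.IH) auto
    moreover have "monom_on X \<alpha> \<notin> cfun.span (monom_on X ` (F - {\<alpha>}))"
    proof
      assume "monom_on X \<alpha> \<in> cfun.span (monom_on X ` (F - {\<alpha>}))"
      also have "\<dots> \<subseteq> cfun.span (monom_on X ` {\<beta>. grlex_less \<beta> \<alpha>})"
        using \<alpha>(2) by (intro cfun.span_mono) blast
      finally show False using \<alpha>(1) psubset.prems by (auto simp: standard_exps_def)
    qed
    moreover have "monom_on X ` F = insert (monom_on X \<alpha>) (monom_on X ` (F - {\<alpha>}))"
      using \<alpha>(1) by auto
    ultimately show ?thesis by (simp add: cfun.independent_insertI)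
  qed (simp add: cfun.independent_empty)
qed

lemma card_le_card_nodes_if_subset_standard_exps:
  fixes X :: "('n::finite \<Rightarrow> complex) set"
  assumes X: "finite X" and F: "finite F" "F \<subseteq> standard_exps X"
  shows "card F \<le> card X"
proof -
  define \<delta> :: "('n \<Rightarrow> complex) \<Rightarrow> ('n \<Rightarrow> complex) \<Rightarrow> complex" where "\<delta> = (\<lambda>x y. if y = x then (1::complex) else 0)"
  have "(\<Sum>x\<in>X. (\<lambda>y. monom_eval \<alpha> x * \<delta> x y)) y = (\<Sum>x\<in>X. if y = x then monom_eval \<alpha> x else 0)"
    for \<alpha> y
    unfolding sum_fun_apply \<delta>_def by (rule sum.cong) auto
  then have "monom_on X \<alpha> y = (\<Sum>x\<in>X. (\<lambda>y. monom_eval \<alpha> x * \<delta> x y)) y" for \<alpha> y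
    using X by (simp add: monom_on_def sum.delta')
  then have "monom_on X \<alpha> = (\<Sum>x\<in>X. (\<lambda>y. monom_eval \<alpha> x * \<delta> x y))" for \<alpha>
    by (rule ext)
  moreover have "(\<Sum>x\<in>X. (\<lambda>y. monom_eval \<alpha> x * \<delta> x y)) \<in> cfun.span (\<delta> ` X)" for \<alpha>
    by (intro cfun.span_sum cfun.span_scale[of "\<delta> _"] cfun.span_base) auto
  ultimately have "monom_on X ` F \<subseteq> cfun.span (\<delta> ` X)"
    by auto
  then have "card (monom_on X ` F) \<le> card (\<delta> ` X)"
    using cfun.independent_span_bound[OF _ independent_monom_on_standard_exps[OF F]] X by simp
  also have "\<dots> \<le> card X" using X by (rule card_image_le)
  also have "card (monom_on X ` F) = card F"
    using inj_on_subset[OF inj_on_monom_on_standard_exps F(2)] by (rule card_image)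
  finally show ?thesis .
qed

lemma standard_exps_subset_hyperbolic_cross:
  assumes "finite X" "card X \<le> N"
  shows "standard_exps X \<subseteq> hyperbolic_cross N"
proof
  fix \<alpha> assume \<alpha>: "\<alpha> \<in> standard_exps X"
  define B where "B = {\<beta>. \<forall>j. \<beta> j \<le> \<alpha> j}"
  have B_eq: "B = PiE UNIV (\<lambda>j. {0..\<alpha> j})" by (auto simp: B_def PiE_UNIV_domain)
  have "finite B" by (simp add: B_eq finite_PiE)
  moreover have "B \<subseteq> standard_exps X"
    using standard_exps_downward_closed[OF \<alpha>] by (auto simp: B_def)
  ultimately have "card B \<le> card X"
    using assms(1) by (intro card_le_card_nodes_if_subset_standard_exps)
  moreover have "card B = (\<Prod>j\<in>UNIV. \<alpha> j + 1)" unfolding B_eq by (simp add: card_PiE)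
  ultimately show "\<alpha> \<in> hyperbolic_cross N" using assms by (simp add: hyperbolic_cross_def)
qed

section \<open>Degree reducing interpolation from the hyperbolic cross\<close>

lemma mpoly_eval_eq_sum:
  assumes "finite K" "Poly_Mapping.keys p \<subseteq> K"
  shows "mpoly_eval p x = (\<Sum>\<alpha>\<in>K. Poly_Mapping.lookup p \<alpha> * monom_eval \<alpha> x)"
  unfolding mpoly_eval_def monom_eval_def
  by (rule sum.mono_neutral_left[OF assms]) (auto simp: in_keys_iff)

lemma mpoly_deg_eq_Max:
  "p \<noteq> 0 \<Longrightarrow> mpoly_deg p = int (Max (total_degree ` Poly_Mapping.keys p))"
  by (simp add: mpoly_deg_def total_degree_def[abs_def])

lemma total_degree_le_mpoly_deg:
  assumes "\<alpha> \<in> Poly_Mapping.keys p"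
  shows "int (total_degree \<alpha>) \<le> mpoly_deg p"
proof -
  have "total_degree \<alpha> \<le> Max (total_degree ` Poly_Mapping.keys p)"
    using assms by (intro Max_ge) auto
  moreover have "p \<noteq> 0" using assms by auto
  ultimately show ?thesis by (simp add: mpoly_deg_eq_Max)
qed

lemma mpoly_deg_le:
  assumes "\<And>\<alpha>. \<alpha> \<in> Poly_Mapping.keys p \<Longrightarrow> total_degree \<alpha> \<le> d"
  shows "mpoly_deg p \<le> int d"
  using assms by (cases "p = 0") (auto simp: mpoly_deg_def total_degree_def)

lemma mpoly_eval_single: "mpoly_eval (Poly_Mapping.single \<alpha> 1) = monom_eval \<alpha>"
  by (simp add: fun_eq_iff mpoly_eval_def monom_eval_def)

lemma mpoly_deg_single: "mpoly_deg (Poly_Mapping.single \<alpha> 1) = int (total_degree \<alpha>)"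
proof -
  have "Poly_Mapping.single \<alpha> (1::complex) \<noteq> 0"
    by (metis lookup_single_eq lookup_zero zero_neq_one)
  then show ?thesis by (simp add: mpoly_deg_eq_Max)
qed

lemma restricted_eval_in_span_standard_exps:
  assumes "\<And>\<alpha>. \<alpha> \<in> Poly_Mapping.keys q \<Longrightarrow> total_degree \<alpha> \<le> d"
  shows "(\<lambda>x. if x \<in> X then mpoly_eval q x else 0)
    \<in> cfun.span (monom_on X ` {\<beta> \<in> standard_exps X. total_degree \<beta> \<le> d})"
proof -
  have "(\<lambda>x. if x \<in> X then mpoly_eval q x else 0)
      = (\<Sum>\<alpha>\<in>Poly_Mapping.keys q. (\<lambda>x. Poly_Mapping.lookup q \<alpha> * monom_on X \<alpha> x))"
    by (auto simp: fun_eq_iff sum_fun_apply monom_on_def mpoly_eval_eq_sum[OF finite_keys order_refl])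
  also have "\<dots> \<in> cfun.span (monom_on X ` {\<beta> \<in> standard_exps X. total_degree \<beta> \<le> d})"
  proof (intro cfun.span_sum cfun.span_scale)
    fix \<alpha> assume "\<alpha> \<in> Poly_Mapping.keys q"
    then have "{\<beta> \<in> standard_exps X. \<beta> = \<alpha> \<or> grlex_less \<beta> \<alpha>}
        \<subseteq> {\<beta> \<in> standard_exps X. total_degree \<beta> \<le> d}"
      using assms grlex_less_total_degree le_trans by blast
    with monom_on_in_span_standard_exps[of X \<alpha>]
    show "monom_on X \<alpha> \<in> cfun.span (monom_on X ` {\<beta> \<in> standard_exps X. total_degree \<beta> \<le> d})"
      using cfun.span_mono[OF image_mono] by blast
  qed
  finally show ?thesis .
qed

lemma exists_mpoly_of_span:
  assumes "finite G" "inj_on (monom_on X) G" "f \<in> cfun.span (monom_on X ` G)"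
  obtains p where "Poly_Mapping.keys p \<subseteq> G" "\<And>x. x \<in> X \<Longrightarrow> mpoly_eval p x = f x"
proof -
  obtain u where "f = (\<Sum>v\<in>monom_on X ` G. (\<lambda>x. u v * v x))"
    using assms(1,3) cfun.span_finite[of "monom_on X ` G"] by auto
  then have f_eq: "f = (\<Sum>\<alpha>\<in>G. (\<lambda>x. u (monom_on X \<alpha>) * monom_on X \<alpha> x))"
    by (simp add: sum.reindex[OF assms(2)])
  define c where "c = (\<lambda>\<alpha>. if \<alpha> \<in> G then u (monom_on X \<alpha>) else 0)"
  define p :: "'a mpoly" where "p = Abs_poly_mapping c"
  have "finite {\<alpha>. c \<alpha> \<noteq> 0}"
    by (rule finite_subset[OF _ assms(1)]) (auto simp: c_def split: if_splits)
  then have lookup_p: "Poly_Mapping.lookup p = c" by (simp add: p_def)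
  have keys_p: "Poly_Mapping.keys p \<subseteq> G"
    by (auto simp: in_keys_iff lookup_p c_def split: if_splits)
  show thesis
  proof (rule that[OF keys_p])
    fix x assume "x \<in> X"
    then show "mpoly_eval p x = f x"
      unfolding mpoly_eval_eq_sum[OF assms(1) keys_p] f_eq sum_fun_apply
      by (intro sum.cong) (auto simp: lookup_p c_def monom_on_def)
  qed
qed

theorem deg_red_univ_interp_space_hyperbolic_cross:
  "deg_red_univ_interp_space (monomial_span (hyperbolic_cross N :: ('n::finite \<Rightarrow> nat) set)) N"
  unfolding deg_red_univ_interp_space_def
proof (intro allI impI)
  fix X :: "('n \<Rightarrow> complex) set" and q :: "'n mpoly"
  assume X: "finite X \<and> card X \<le> N"
  show "\<exists>p\<in>monomial_span (hyperbolic_cross N).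
    (\<forall>x\<in>X. mpoly_eval p x = mpoly_eval q x) \<and> mpoly_deg p \<le> mpoly_deg q"
  proof (cases "q = 0")
    case True
    then show ?thesis by (intro bexI[of _ 0]) (auto simp: monomial_span_def)
  next
    case False
    define d where "d = nat (mpoly_deg q)"
    have deg_q: "mpoly_deg q = int d" using False by (simp add: d_def mpoly_deg_def)
    define G where "G = {\<beta> \<in> standard_exps X. total_degree \<beta> \<le> d}"
    have fin_G: "finite G"
      by (rule finite_subset[OF _ finite_bounded_exponents[of d]])
         (auto simp: G_def intro: order_trans[OF component_le_total_degree])
    have inj_G: "inj_on (monom_on X) G"
      by (rule inj_on_subset[OF inj_on_monom_on_standard_exps]) (auto simp: G_def)
    have span_G: "(\<lambda>x. if x \<in> X then mpoly_eval q x else 0) \<in> cfun.span (monom_on X ` G)"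
      unfolding G_def using total_degree_le_mpoly_deg deg_q
      by (intro restricted_eval_in_span_standard_exps) force
    obtain p where keys_p: "Poly_Mapping.keys p \<subseteq> G"
      and eval_p: "\<And>x. x \<in> X \<Longrightarrow> mpoly_eval p x = mpoly_eval q x"
      using exists_mpoly_of_span[OF fin_G inj_G span_G] by (metis (no_types, lifting))
    show ?thesis
    proof (intro bexI conjI ballI)
      show "p \<in> monomial_span (hyperbolic_cross N)"
        using keys_p standard_exps_subset_hyperbolic_cross[of X N] X
        by (auto simp: monomial_span_def G_def)
      show "mpoly_deg p \<le> mpoly_deg q"
        unfolding deg_q by (rule mpoly_deg_le) (use keys_p in \<open>auto simp: G_def\<close>)
    qed (simp add: eval_p)
  qed
qed

section \<open>Minimality: a grid of roots of unity\<close>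

lemma sum_roots_unity_power:
  assumes "n > 0"
  shows "(\<Sum>z | z ^ n = 1. (z::complex) ^ r) = (if n dvd r then of_nat n else 0)"
proof (cases "n dvd r")
  case True
  then have "z ^ r = 1" if "z ^ n = 1" for z :: complex
    using that by (auto simp: power_mult)
  then show ?thesis
    using True assms by (simp add: card_roots_unity_eq)
next
  case False
  define \<omega> :: complex where "\<omega> = exp (2 * of_real pi * \<i> / of_nat n)"
  have \<omega>_pow: "\<omega> ^ k = exp (2 * of_real pi * \<i> * of_nat k / of_nat n)" for k
    unfolding \<omega>_def by (simp add: exp_of_nat_mult[symmetric] field_simps)
  have "\<omega> ^ n = 1"
    using assms by (simp add: \<omega>_pow complex_root_unity_eq_1)
  have "\<omega> \<noteq> 0"
    by (simp add: \<omega>_def)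
  have "\<omega> ^ r \<noteq> 1"
    using False assms by (simp add: \<omega>_pow complex_root_unity_eq_1)
  \<comment> \<open>Multiplication by \<open>\<omega>\<close> permutes the \<open>n\<close>-th roots of unity.\<close>
  have "(\<Sum>z | z ^ n = 1. z ^ r) = (\<Sum>z | z ^ n = 1. (\<omega> * z) ^ r)"
    by (rule sum.reindex_bij_witness[of _ "\<lambda>z. \<omega> * z" "\<lambda>z. z / \<omega>"])
       (use \<open>\<omega> ^ n = 1\<close> \<open>\<omega> \<noteq> 0\<close> in \<open>auto simp: power_mult_distrib power_divide\<close>)
  also have "\<dots> = \<omega> ^ r * (\<Sum>z | z ^ n = 1. z ^ r)"
    by (simp add: power_mult_distrib sum_distrib_left)
  finally show ?thesis
    using \<open>\<omega> ^ r \<noteq> 1\<close> False by (simp add: right_diff_distrib)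
qed

definition root_grid :: "('n::finite \<Rightarrow> nat) \<Rightarrow> ('n \<Rightarrow> complex) set" where
  "root_grid \<alpha> = PiE UNIV (\<lambda>j. {z. z ^ Suc (\<alpha> j) = 1})"

lemma finite_root_grid: "finite (root_grid \<alpha>)"
  unfolding root_grid_def by (intro finite_PiE finite_roots_unity) simp_all

lemma card_root_grid: "card (root_grid \<alpha>) = (\<Prod>j\<in>UNIV. \<alpha> j + 1)"
  unfolding root_grid_def by (simp add: card_PiE card_roots_unity_eq del: power_Suc)

definition grid_functional :: "('n::finite \<Rightarrow> nat) \<Rightarrow> (('n \<Rightarrow> complex) \<Rightarrow> complex) \<Rightarrow> complex" where
  "grid_functional \<alpha> f = (\<Sum>x\<in>root_grid \<alpha>. (\<Prod>j\<in>UNIV. x j) * f x)"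

lemma grid_functional_monom_eval:
  "grid_functional \<alpha> (monom_eval \<beta>) = (\<Prod>j\<in>UNIV. \<Sum>z | z ^ Suc (\<alpha> j) = 1. z ^ Suc (\<beta> j))"
proof -
  have "grid_functional \<alpha> (monom_eval \<beta>) = (\<Sum>x\<in>root_grid \<alpha>. \<Prod>j\<in>UNIV. x j ^ Suc (\<beta> j))"
    unfolding grid_functional_def monom_eval_def by (simp add: prod.distrib[symmetric])
  also have "\<dots> = (\<Prod>j\<in>UNIV. \<Sum>z | z ^ Suc (\<alpha> j) = 1. z ^ Suc (\<beta> j))"
    unfolding root_grid_def
    by (rule prod_sum_PiE[symmetric]) (simp_all add: finite_roots_unity del: power_Suc)
  finally show ?thesis .
qed

lemma grid_functional_monom_eval_eq_0:
  assumes "\<beta> j < \<alpha> j"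
  shows "grid_functional \<alpha> (monom_eval \<beta>) = 0"
proof -
  have "\<not> Suc (\<alpha> j) dvd Suc (\<beta> j)"
    using assms by (auto dest: dvd_imp_le)
  then have "(\<Sum>z | z ^ Suc (\<alpha> j) = 1. (z::complex) ^ Suc (\<beta> j)) = 0"
    by (simp only: sum_roots_unity_power zero_less_Suc if_False)
  then show ?thesis
    unfolding grid_functional_monom_eval by (intro prod_zero) auto
qed

lemma grid_functional_monom_eval_self: "grid_functional \<alpha> (monom_eval \<alpha>) \<noteq> 0"
proof -
  have "(\<Sum>z | z ^ Suc (\<alpha> j) = 1. (z::complex) ^ Suc (\<alpha> j)) \<noteq> 0" for j
    by (simp only: sum_roots_unity_power zero_less_Suc dvd_refl if_True of_nat_eq_0_iff)
  then show ?thesis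
    unfolding grid_functional_monom_eval by (simp add: prod_zero_iff del: power_Suc)
qed

lemma grid_functional_mpoly_eval:
  "grid_functional \<alpha> (mpoly_eval p)
    = (\<Sum>\<beta>\<in>Poly_Mapping.keys p. Poly_Mapping.lookup p \<beta> * grid_functional \<alpha> (monom_eval \<beta>))"
  unfolding grid_functional_def mpoly_eval_eq_sum[OF finite_keys order_refl]
  by (simp add: sum_distrib_left sum_distrib_right sum.swap[of _ "root_grid \<alpha>"] mult_ac)

theorem hyperbolic_cross_subset_interp_set:
  assumes "monomial_deg_red_univ_interp_set A N"
  shows "hyperbolic_cross N \<subseteq> (A :: ('n::finite \<Rightarrow> nat) set)"
proof
  fix \<alpha> :: "'n \<Rightarrow> nat" assume "\<alpha> \<in> hyperbolic_cross N"
  then have "finite (root_grid \<alpha>) \<and> card (root_grid \<alpha>) \<le> N"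
    by (simp add: finite_root_grid card_root_grid hyperbolic_cross_def)
  then obtain p where p_A: "p \<in> monomial_span A"
    and eval_p: "\<And>x. x \<in> root_grid \<alpha> \<Longrightarrow> mpoly_eval p x = monom_eval \<alpha> x"
    and deg_p: "mpoly_deg p \<le> int (total_degree \<alpha>)"
    using assms[unfolded monomial_deg_red_univ_interp_set_def deg_red_univ_interp_space_def,
        rule_format, of "root_grid \<alpha>" "Poly_Mapping.single \<alpha> 1"]
    by (auto simp: mpoly_eval_single mpoly_deg_single)
  have "grid_functional \<alpha> (monom_eval \<alpha>) = grid_functional \<alpha> (mpoly_eval p)"
    using eval_p by (simp add: grid_functional_def)
  also have "\<dots> = (\<Sum>\<beta>\<in>Poly_Mapping.keys p.
      if \<beta> = \<alpha> then Poly_Mapping.lookup p \<alpha> * grid_functional \<alpha> (monom_eval \<alpha>) else 0)"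
    unfolding grid_functional_mpoly_eval
  proof (intro sum.cong refl)
    fix \<beta> assume "\<beta> \<in> Poly_Mapping.keys p"
    then have "total_degree \<beta> \<le> total_degree \<alpha>"
      using total_degree_le_mpoly_deg deg_p by fastforce
    then have "\<beta> \<noteq> \<alpha> \<Longrightarrow> grid_functional \<alpha> (monom_eval \<beta>) = 0"
      using exists_component_less grid_functional_monom_eval_eq_0 by blast
    then show "Poly_Mapping.lookup p \<beta> * grid_functional \<alpha> (monom_eval \<beta>)
        = (if \<beta> = \<alpha> then Poly_Mapping.lookup p \<alpha> * grid_functional \<alpha> (monom_eval \<alpha>) else 0)"
      by auto
  qed
  finally have "\<alpha> \<in> Poly_Mapping.keys p"
    using grid_functional_monom_eval_self[of \<alpha>] by (auto split: if_splits)
  with p_A show "\<alpha> \<in> A" by (auto simp: monomial_span_def)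
qed

theorem corollary23:
  fixes N :: nat
  assumes "N \<ge> 1"
  shows "monomial_deg_red_univ_interp_set (hyperbolic_cross N :: ('n::finite \<Rightarrow> nat) set) N
         \<and> (\<forall>A :: ('n \<Rightarrow> nat) set. monomial_deg_red_univ_interp_set A N \<longrightarrow> hyperbolic_cross N \<subseteq> A)"
  using deg_red_univ_interp_space_hyperbolic_cross hyperbolic_cross_subset_interp_set
  by (auto simp: monomial_deg_red_univ_interp_set_def)

end
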